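(* For every $\lambda\in P^+$ (notation as in the context) one has $$(\widetilde\lambda+2\widetilde\rho,\widetilde\lambda)=(\lambda+2\rho,\lambda)=(\overline\lambda+2\overline\rho,\overline\lambda).$$
   Context: Fix $m\in\mathbb Z_{\ge0}$ and a type $\mathfrak x\in\{\mathfrak a,\mathfrak b,\mathfrak b^\bullet,\mathfrak c,\mathfrak d\}$. Consider symbols $\Lambda_0$ and $\epsilon_j$ for $j\in\{-m,\dots,-1\}\cup\frac12\mathbb N$, and the symmetric bilinear form on their $\mathbb C$-span given by $(\Lambda_0,\Lambda_0)=0$, $(\epsilon_i,\epsilon_j)=(-1)^{2j}\delta_{ij}$, $(\Lambda_0,\epsilon_j)=-\delta_j$, where $\delta_j=1$ for $j>0$ and $\delta_j=0$ for $j<0$. Dominant weights: given a partition $\nu=(\nu_1,\nu_2,\dots)$, $d\in\mathbb C$ and $\lambda_{-m},\dots,\lambda_{-1}\in\mathbb C$ (in $\mathbb Z$ for type $\mathfrak b^\bullet$), put $\lambda=\sum_{i=-m}^{-1}\lambda_i\epsilon_i+\sum_{j\in\mathbb N}\nu_j\epsilon_j+d\Lambda_0$, $\overline\lambda=\sum_{i=-m}^{-1}\lambda_i\epsilon_i+\sum_{s\in\frac12+\mathbb Z_{\ge0}}\nu'_{s+1/2}\epsilon_s+d\Lambda_0$, $\widetilde\lambda=\sum_{i=-m}^{-1}\lambda_i\epsilon_i+\sum_{r\in\frac12\mathbb N}\theta(\nu)_r\epsilon_r+d\Lambda_0$, where $\nu'$ is the conjugate partition and $\theta(\nu)_{i-1/2}=\max\{\nu'_i-i+1,0\}$,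 $\theta(\nu)_i=\max\{\nu_i-i,0\}$ for $i\in\mathbb N$. $P^+$ is the set of all such $\lambda$. Let $\mathbf r=-1$ in type $\mathfrak a$, $-m-\frac12$ in types $\mathfrak b,\mathfrak b^\bullet$, $-m-1$ in type $\mathfrak c$, $-m$ in type $\mathfrak d$. For a weight $\mu=c\Lambda_0+\sum_j\mu_j\epsilon_j$ (finitely many nonzero $\mu_j$) define $(\mu+2\rho,\mu):=(\mu,\mu)+2\sum_j\mu_j\rho_j$, $(\mu+2\overline\rho,\mu):=(\mu,\mu)+2\sum_j\mu_j\overline\rho_j$, $(\mu+2\widetilde\rho,\mu):=(\mu,\mu)+2\sum_j\mu_j\widetilde\rho_j$, where for $j<0$: $\rho_j=\overline\rho_j=\widetilde\rho_j=\mathbf r-j$; for $j\in\mathbb N$: $\rho_j=\mathbf r+1-j$; for $j\in\frac12+\mathbb Z_{\ge0}$: $\overline\rho_j=\mathbf r+j+\frac12$; for $j\in\frac12\mathbb N$: $\widetilde\rho_j=\mathbf r+1$. *)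

theory Defs
  imports Complex_Main
begin

datatype lie_type = TA | TB | TBbullet | TC | TD

definition rr :: "lie_type \<Rightarrow> nat \<Rightarrow> complex" where
  "rr x m = (case x of TA \<Rightarrow> -1
                     | TB \<Rightarrow> - of_nat m - 1/2
                     | TBbullet \<Rightarrow> - of_nat m - 1/2
                     | TC \<Rightarrow> - of_nat m - 1
                     | TD \<Rightarrow> - of_nat m)"

text \<open>Indices j are rationals: j in {-m,...,-1} or j in (1/2)N.
  A weight c Lambda_0 + sum_j mu_j eps_j is a pair (c, mu) with mu finitely supported.\<close>
type_synonym weight = "complex \<times> (rat \<Rightarrow> complex)"

definition supp :: "(rat \<Rightarrow> complex) \<Rightarrow> rat set" where
  "supp f = {j. f j \<noteq> 0}"

definition delta :: "rat \<Rightarrow> complex" where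
  "delta j = (if j > 0 then 1 else 0)"

definition form :: "weight \<Rightarrow> weight \<Rightarrow> complex" where
  "form mu nu = (case mu of (c, f) \<Rightarrow> case nu of (d, g) \<Rightarrow>
      c * d * 0
    + (\<Sum>j\<in>supp f \<union> supp g. (-1::complex) powi \<lfloor>2 * j\<rfloor> * f j * g j)
    + c * (\<Sum>j\<in>supp g. - delta j * g j)
    + d * (\<Sum>j\<in>supp f. - delta j * f j))"

definition form_rho :: "weight \<Rightarrow> (rat \<Rightarrow> complex) \<Rightarrow> complex" where
  "form_rho mu rho = form mu mu + 2 * (\<Sum>j\<in>supp (snd mu). snd mu j * rho j)"

definition rho :: "complex \<Rightarrow> rat \<Rightarrow> complex" where
  "rho r j = (if j < 0 then r - of_rat j
              else if j \<in> \<int> \<and> j > 0 then r + 1 - of_rat j else 0)"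

definition rho_bar :: "complex \<Rightarrow> rat \<Rightarrow> complex" where
  "rho_bar r j = (if j < 0 then r - of_rat j
              else if j - 1/2 \<in> \<int> \<and> j > 0 then r + of_rat j + 1/2 else 0)"

definition rho_tilde :: "complex \<Rightarrow> rat \<Rightarrow> complex" where
  "rho_tilde r j = (if j < 0 then r - of_rat j
              else if 2 * j \<in> \<int> \<and> j > 0 then r + 1 else 0)"

text \<open>Partitions: nu :: nat => nat, entries nu 1, nu 2, ... (nu 0 is ignored),
  weakly decreasing and finitely supported.\<close>
definition is_partition :: "(nat \<Rightarrow> nat) \<Rightarrow> bool" where
  "is_partition nu \<longleftrightarrow> (\<forall>i\<ge>1. nu (Suc i) \<le> nu i) \<and> finite {i. i \<ge> 1 \<and> nu i \<noteq> 0}"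

definition conj_part :: "(nat \<Rightarrow> nat) \<Rightarrow> nat \<Rightarrow> nat" where
  "conj_part nu i = card {j. j \<ge> 1 \<and> i \<le> nu j}"

definition neg_coef :: "nat \<Rightarrow> (int \<Rightarrow> complex) \<Rightarrow> rat \<Rightarrow> complex" where
  "neg_coef m l j = (if j \<in> \<int> \<and> - of_nat m \<le> j \<and> j \<le> -1 then l \<lfloor>j\<rfloor> else 0)"

definition lam :: "nat \<Rightarrow> (int \<Rightarrow> complex) \<Rightarrow> (nat \<Rightarrow> nat) \<Rightarrow> complex \<Rightarrow> weight" where
  "lam m l nu d = (d, \<lambda>j. if j < 0 then neg_coef m l j
      else if j \<in> \<int> \<and> j \<ge> 1 then of_nat (nu (nat \<lfloor>j\<rfloor>)) else 0)"

definition lam_bar :: "nat \<Rightarrow> (int \<Rightarrow> complex) \<Rightarrow> (nat \<Rightarrow> nat) \<Rightarrow> complex \<Rightarrow> weight" where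
  "lam_bar m l nu d = (d, \<lambda>j. if j < 0 then neg_coef m l j
      else if j - 1/2 \<in> \<int> \<and> j > 0 then of_nat (conj_part nu (nat \<lfloor>j + 1/2\<rfloor>)) else 0)"

text \<open>theta(nu)_{i-1/2} = max(nu'_i - i + 1, 0), theta(nu)_i = max(nu_i - i, 0).\<close>
definition lam_tilde :: "nat \<Rightarrow> (int \<Rightarrow> complex) \<Rightarrow> (nat \<Rightarrow> nat) \<Rightarrow> complex \<Rightarrow> weight" where
  "lam_tilde m l nu d = (d, \<lambda>j. if j < 0 then neg_coef m l j
      else if j \<in> \<int> \<and> j \<ge> 1 then
        of_int (max (int (nu (nat \<lfloor>j\<rfloor>)) - \<lfloor>j\<rfloor>) 0)
      else if j - 1/2 \<in> \<int> \<and> j > 0 then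
        of_int (max (int (conj_part nu (nat \<lfloor>j + 1/2\<rfloor>)) - \<lfloor>j + 1/2\<rfloor> + 1) 0)
      else 0)"

end

theory Submission
  imports Defs
begin

(* Each of the three numbers is a contribution of the indices j < 0, where the three weights
   and the three rho's agree, plus the sum of 2 (j - i) + 2 r + 1 - 2 d over the boxes (i, j)
   of the Young diagram of nu.  Everything rests on n^2 = 1 + 3 + ... + (2 n - 1):
   for lambda the term of epsilon_i, nu_i^2 - 2 d nu_i + 2 nu_i (r + 1 - i), is the sum over the
   boxes of row i; for lambda-bar the term of epsilon_(k - 1/2), whose square enters with sign -1,
   is the sum over the boxes of column k; for lambda-tilde, theta(nu)_i and theta(nu)_(k - 1/2)
   collect the boxes of row i strictly right of the diagonal and the boxes of column k on or below
   it. *)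

lemma sum_odd_numbers_shifted:
  fixes s K :: "'a::comm_ring_1"
  shows "(\<Sum>j=Suc a..n. s * (2 * (of_nat j - of_nat a) - 1) + K)
       = s * (of_nat (n - a) * of_nat (n - a)) + of_nat (n - a) * K"
proof (induction n)
  case (Suc n)
  show ?case
  proof (cases "a \<le> n")
    case True
    then have "of_nat (Suc n - a) = (of_nat (n - a) + 1 :: 'a)"
      by (simp add: Suc_diff_le)
    moreover have "of_nat (Suc n) - of_nat a = (of_nat (n - a) + 1 :: 'a)"
      using True by simp
    ultimately show ?thesis
      using True Suc by (simp add: algebra_simps)
  qed (simp add: Suc)
qed simp

lemma sum_atLeastAtMost_if_le:
  fixes a n :: nat
  assumes "1 \<le> a"
  shows "(\<Sum>j=1..n. if a \<le> j then f j else 0) = (\<Sum>j=a..n. f j)"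
proof -
  have "{j \<in> {1..n}. a \<le> j} = {a..n}"
    using assms by auto
  then show ?thesis
    by (metis (no_types) sum.inter_filter finite_atLeastAtMost)
qed

lemma Ints_minus_half_notin:
  fixes x :: "'a :: linordered_field"
  assumes "x \<in> \<int>"
  shows "x - 1/2 \<notin> \<int>"
  using Ints_eq_abs_less1[OF assms, of "x - 1/2"] by auto

lemma minus_one_powi_floor_double_Ints:
  fixes x :: "'a :: floor_ceiling"
  assumes "x \<in> \<int>"
  shows "(-1 :: 'b :: division_ring) powi \<lfloor>2 * x\<rfloor> = 1"
proof -
  from assms obtain z where "x = of_int z" by (auto elim: Ints_cases)
  then have "\<lfloor>2 * x\<rfloor> = 2 * z" by (metis floor_of_int of_int_mult of_int_numeral)
  then show ?thesis by (simp add: power_int_mult)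
qed

lemma minus_one_powi_floor_double_half_Ints:
  fixes x :: "'a :: floor_ceiling"
  assumes "x - 1/2 \<in> \<int>"
  shows "(-1 :: 'b :: division_ring) powi \<lfloor>2 * x\<rfloor> = -1"
proof -
  from assms obtain z where "x - 1/2 = of_int z" by (auto elim: Ints_cases)
  then have "2 * x = of_int (2 * z + 1)" by (simp add: field_simps)
  then have "\<lfloor>2 * x\<rfloor> = 2 * z + 1" by (metis floor_of_int)
  then show ?thesis by (simp add: power_int_add power_int_mult)
qed

definition form_rho_term :: "complex \<Rightarrow> (rat \<Rightarrow> complex) \<Rightarrow> (rat \<Rightarrow> complex) \<Rightarrow> rat \<Rightarrow> complex" where
  "form_rho_term c f \<rho> j = (-1) powi \<lfloor>2 * j\<rfloor> * f j * f j - 2 * c * delta j * f j + 2 * f j * \<rho> j"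

lemma form_rho_eq_sum:
  assumes "finite S" and "supp f \<subseteq> S"
  shows "form_rho (c, f) \<rho> = (\<Sum>j\<in>S. form_rho_term c f \<rho> j)"
proof -
  have "form_rho (c, f) \<rho> = (\<Sum>j\<in>supp f. form_rho_term c f \<rho> j)"
    unfolding form_rho_term_def form_rho_def form_def
    by (simp add: sum.distrib sum_subtractf sum_distrib_left sum_negf algebra_simps)
  also have "\<dots> = (\<Sum>j\<in>S. form_rho_term c f \<rho> j)"
    using assms by (intro sum.mono_neutral_left) (auto simp: form_rho_term_def supp_def)
  finally show ?thesis .
qed

(* a i is the coefficient of epsilon_i and b k that of epsilon_(k - 1/2). *)
definition mk_coeffs ::
    "nat \<Rightarrow> (int \<Rightarrow> complex) \<Rightarrow> (nat \<Rightarrow> complex) \<Rightarrow> (nat \<Rightarrow> complex) \<Rightarrow> rat \<Rightarrow> complex" where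
  "mk_coeffs m l a b j = (if j < 0 then neg_coef m l j
      else if j \<in> \<int> \<and> j \<ge> 1 then a (nat \<lfloor>j\<rfloor>)
      else if j - 1/2 \<in> \<int> \<and> j > 0 then b (nat \<lfloor>j + 1/2\<rfloor>) else 0)"

lemma mk_coeffs_of_int: "- int m \<le> i \<Longrightarrow> i \<le> -1 \<Longrightarrow> mk_coeffs m l a b (of_int i) = l i"
  by (simp add: mk_coeffs_def neg_coef_def)

lemma mk_coeffs_of_nat: "1 \<le> i \<Longrightarrow> mk_coeffs m l a b (of_nat i) = a i"
  by (simp add: mk_coeffs_def)

lemma mk_coeffs_half: "1 \<le> k \<Longrightarrow> mk_coeffs m l a b (of_nat k - 1/2) = b k"
  using Ints_minus_half_notin[of "of_nat k :: rat"] by (simp add: mk_coeffs_def)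

lemma supp_mk_coeffs:
  assumes "\<forall>i>N. a i = 0" and "\<forall>k>N. b k = 0"
  shows "supp (mk_coeffs m l a b)
    \<subseteq> of_int ` {- int m..-1} \<union> of_nat ` {1..N} \<union> (\<lambda>k. of_nat k - 1/2) ` {1..N}"
proof
  fix j assume "j \<in> supp (mk_coeffs m l a b)"
  then have nz: "mk_coeffs m l a b j \<noteq> 0" by (simp add: supp_def)
  consider "j < 0" | "\<not> j < 0" "j \<in> \<int>" "j \<ge> 1" | "\<not> j < 0" "j \<notin> \<int> \<or> j < 1" "j - 1/2 \<in> \<int>" "j > 0"
    using nz by (force simp: mk_coeffs_def)
  then show "j \<in> of_int ` {- int m..-1} \<union> of_nat ` {1..N} \<union> (\<lambda>k. of_nat k - 1/2) ` {1..N}"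
  proof cases
    case 1
    with nz have "j \<in> \<int>" "- of_nat m \<le> j" "j \<le> -1"
      by (auto simp: mk_coeffs_def neg_coef_def split: if_splits)
    then obtain i where "j = of_int i" "- int m \<le> i" "i \<le> -1"
      by (auto elim: Ints_cases)
    then show ?thesis by auto
  next
    case 2
    then obtain z where z: "j = of_int z" "1 \<le> z" by (auto elim: Ints_cases)
    then have i: "j = of_nat (nat z)" "1 \<le> nat z" by simp_all
    with nz assms(1) have "nat z \<le> N" by (metis mk_coeffs_of_nat leI)
    with i have "j \<in> of_nat ` {1..N}" by (metis atLeastAtMost_iff image_eqI)
    then show ?thesis by blast
  next
    case 3
    then obtain z where z: "j - 1/2 = of_int z" by (auto elim: Ints_cases)
    with 3 have "0 \<le> z" by linarith
    with z have k: "j = of_nat (nat (z + 1)) - 1/2" "1 \<le> nat (z + 1)" by (simp_all add: algebra_simps)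
    with nz assms(2) have "nat (z + 1) \<le> N" by (metis mk_coeffs_half leI)
    with k have "j \<in> (\<lambda>k. of_nat k - 1/2) ` {1..N}" by (metis atLeastAtMost_iff image_eqI)
    then show ?thesis by blast
  qed
qed

lemma form_rho_mk_coeffs:
  assumes "\<forall>i>N. a i = 0" and "\<forall>k>N. b k = 0"
    and "\<And>i. i < 0 \<Longrightarrow> \<rho> (of_int i) = r - of_int i"
  shows "form_rho (c, mk_coeffs m l a b) \<rho> =
      (\<Sum>i=- int m..-1. l i * l i + 2 * l i * (r - of_int i))
    + (\<Sum>i=1..N. a i * a i - 2 * c * a i + 2 * a i * \<rho> (of_nat i))
    + (\<Sum>k=1..N. - (b k * b k) - 2 * c * b k + 2 * b k * \<rho> (of_nat k - 1/2))"
proof -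
  let ?t = "form_rho_term c (mk_coeffs m l a b) \<rho>"
  let ?Neg = "of_int ` {- int m..-1} :: rat set"
  let ?Int = "of_nat ` {1..N} :: rat set"
  let ?Half = "(\<lambda>k. of_nat k - 1/2) ` {1..N} :: rat set"
  have "?Half \<inter> \<int> = {}"
    using Ints_minus_half_notin[OF Ints_of_nat] by (auto simp del: of_nat_add)
  then have "?Int \<inter> ?Half = {}"
    by (auto simp del: of_nat_add)
  moreover have "?Neg \<inter> (?Int \<union> ?Half) = {}"
    by fastforce
  ultimately have expand: "form_rho (c, mk_coeffs m l a b) \<rho> = sum ?t ?Neg + sum ?t ?Int + sum ?t ?Half"
    using form_rho_eq_sum[OF _ supp_mk_coeffs[OF assms(1,2)]]
    by (simp add: sum.union_disjoint Un_assoc add.assoc)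
  have neg: "sum ?t ?Neg = (\<Sum>i=- int m..-1. l i * l i + 2 * l i * (r - of_int i))"
    by (subst sum.reindex) (auto simp: inj_on_def form_rho_term_def mk_coeffs_of_int delta_def assms(3)
        minus_one_powi_floor_double_Ints intro!: sum.cong)
  have int: "sum ?t ?Int = (\<Sum>i=1..N. a i * a i - 2 * c * a i + 2 * a i * \<rho> (of_nat i))"
    by (subst sum.reindex) (auto simp: inj_on_def form_rho_term_def mk_coeffs_of_nat delta_def
        minus_one_powi_floor_double_Ints intro!: sum.cong)
  have half: "sum ?t ?Half = (\<Sum>k=1..N. - (b k * b k) - 2 * c * b k + 2 * b k * \<rho> (of_nat k - 1/2))"
  proof -
    have "(-1 :: complex) powi \<lfloor>2 * (of_nat k - 1/2 :: rat)\<rfloor> = -1" for k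
      by (rule minus_one_powi_floor_double_half_Ints) (simp add: algebra_simps)
    then show ?thesis
      by (subst sum.reindex) (auto simp: inj_on_def form_rho_term_def mk_coeffs_half delta_def
          intro!: sum.cong)
  qed
  show ?thesis
    unfolding expand neg int half ..
qed

lemma is_partition_antimono:
  assumes "is_partition \<nu>" and "1 \<le> i" and "i \<le> i'"
  shows "\<nu> i' \<le> \<nu> i"
  using assms(3)
proof (induction i' rule: dec_induct)
  case (step n)
  with assms(1,2) show ?case
    unfolding is_partition_def by (meson le_trans)
qed simp

lemma is_partition_bounded:
  assumes "is_partition \<nu>"
  obtains N where "\<forall>i>N. \<nu> i = 0" and "\<forall>i\<ge>1. \<nu> i \<le> N"
proof -
  obtain N where N: "\<forall>i\<in>{i. 1 \<le> i \<and> \<nu> i \<noteq> 0}. i \<le> N"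
    using assms finite_nat_set_iff_bounded_le unfolding is_partition_def by blast
  show ?thesis
  proof (rule that[of "max N (\<nu> 1)"])
    show "\<forall>i>max N (\<nu> 1). \<nu> i = 0"
    proof (intro allI impI)
      fix i assume "max N (\<nu> 1) < i"
      then have "1 \<le> i" and "\<not> i \<le> N" by auto
      with N show "\<nu> i = 0" by blast
    qed
    show "\<forall>i\<ge>1. \<nu> i \<le> max N (\<nu> 1)" using is_partition_antimono[OF assms, of 1] by fastforce
  qed
qed

lemma down_closed_eq_atLeastAtMost_card:
  fixes A :: "nat set"
  assumes "finite A" and "A \<subseteq> {1..}" and "\<And>i i'. i \<in> A \<Longrightarrow> 1 \<le> i' \<Longrightarrow> i' \<le> i \<Longrightarrow> i' \<in> A"
  shows "A = {1..card A}"
proof (cases "A = {}")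
  case False
  with assms(1) have "Max A \<in> A" by simp
  have "A = {1..Max A}"
  proof
    show "A \<subseteq> {1..Max A}" using assms(1,2) by auto
    show "{1..Max A} \<subseteq> A" using assms(3) \<open>Max A \<in> A\<close> by auto
  qed
  moreover from this have "card A = Max A"
    by (metis card_atLeastAtMost diff_Suc_1)
  ultimately show ?thesis by simp
qed simp

lemma conj_part_rows:
  assumes "is_partition \<nu>" and "1 \<le> k"
  shows "{i. 1 \<le> i \<and> k \<le> \<nu> i} = {1..conj_part \<nu> k}"
proof -
  have "{i. 1 \<le> i \<and> k \<le> \<nu> i} \<subseteq> {i. 1 \<le> i \<and> \<nu> i \<noteq> 0}"
    using assms(2) by auto
  with assms(1) have "finite {i. 1 \<le> i \<and> k \<le> \<nu> i}"
    unfolding is_partition_def using finite_subset by blast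
  then show ?thesis
    unfolding conj_part_def
    using is_partition_antimono[OF assms(1)] by (intro down_closed_eq_atLeastAtMost_card) (auto intro: le_trans)
qed

lemma conj_part_eq_0:
  assumes "\<forall>i\<ge>1. \<nu> i \<le> N" and "N < k"
  shows "conj_part \<nu> k = 0"
  using assms unfolding conj_part_def by (metis (mono_tags, lifting) card.empty empty_Collect_eq le_trans not_le)

definition young_diagram :: "(nat \<Rightarrow> nat) \<Rightarrow> (nat \<times> nat) set" where
  "young_diagram \<nu> = {(i, j). 1 \<le> i \<and> 1 \<le> j \<and> j \<le> \<nu> i}"

lemma sum_young_diagram_rows:
  assumes "\<forall>i>N. \<nu> i = 0"
  shows "sum g (young_diagram \<nu>) = (\<Sum>i=1..N. \<Sum>j=1..\<nu> i. g (i, j))"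
proof -
  have "i \<le> N" if "1 \<le> j" and "j \<le> \<nu> i" for i j
    using assms that by (metis not_le le_zero_eq not_one_le_zero)
  then have "young_diagram \<nu> = Sigma {1..N} (\<lambda>i. {1..\<nu> i})"
    by (auto simp: young_diagram_def)
  then show ?thesis by (simp add: sum.Sigma)
qed

lemma sum_young_diagram_columns:
  assumes "is_partition \<nu>" and "\<forall>i\<ge>1. \<nu> i \<le> N"
  shows "sum g (young_diagram \<nu>) = (\<Sum>k=1..N. \<Sum>i=1..conj_part \<nu> k. g (i, k))"
proof -
  let ?S = "Sigma {1..N} (\<lambda>k. {1..conj_part \<nu> k})"
  have mem: "(i, k) \<in> young_diagram \<nu> \<longleftrightarrow> (k, i) \<in> ?S" for i k
  proof -
    have "k \<le> N" if "1 \<le> i" and "k \<le> \<nu> i"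
      using assms(2) that le_trans by blast
    moreover have "i \<in> {1..conj_part \<nu> k} \<longleftrightarrow> 1 \<le> i \<and> k \<le> \<nu> i" if "1 \<le> k"
      using conj_part_rows[OF assms(1) that] by blast
    ultimately show ?thesis
      unfolding young_diagram_def by auto
  qed
  have "prod.swap ` young_diagram \<nu> = ?S"
  proof (rule set_eqI)
    fix p :: "nat \<times> nat"
    show "p \<in> prod.swap ` young_diagram \<nu> \<longleftrightarrow> p \<in> ?S"
      using mem[of "snd p" "fst p"] by (cases p) simp
  qed
  then have "sum g (young_diagram \<nu>) = sum (g \<circ> prod.swap) ?S"
    by (metis sum.reindex inj_swap swap_comp_swap comp_assoc comp_id)
  then show ?thesis by (simp add: sum.Sigma prod.swap_def split_def)
qed

lemma sum_young_diagram_diagonal_split: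
  assumes "is_partition \<nu>" and "\<forall>i>N. \<nu> i = 0" and "\<forall>i\<ge>1. \<nu> i \<le> N"
  shows "sum g (young_diagram \<nu>)
    = (\<Sum>i=1..N. \<Sum>j=Suc i..\<nu> i. g (i, j)) + (\<Sum>k=1..N. \<Sum>i=k..conj_part \<nu> k. g (i, k))"
proof -
  have "(\<Sum>p\<in>young_diagram \<nu>. if fst p < snd p then g p else 0)
      = (\<Sum>i=1..N. \<Sum>j=1..\<nu> i. if Suc i \<le> j then g (i, j) else 0)"
    by (simp add: sum_young_diagram_rows[OF assms(2)] Suc_le_eq)
  also have "\<dots> = (\<Sum>i=1..N. \<Sum>j=Suc i..\<nu> i. g (i, j))"
    by (intro sum.cong refl sum_atLeastAtMost_if_le) simp
  finally have upper: "(\<Sum>p\<in>young_diagram \<nu>. if fst p < snd p then g p else 0)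
      = (\<Sum>i=1..N. \<Sum>j=Suc i..\<nu> i. g (i, j))" .
  have "(\<Sum>p\<in>young_diagram \<nu>. if snd p \<le> fst p then g p else 0)
      = (\<Sum>k=1..N. \<Sum>i=1..conj_part \<nu> k. if k \<le> i then g (i, k) else 0)"
    by (simp add: sum_young_diagram_columns[OF assms(1,3)])
  also have "\<dots> = (\<Sum>k=1..N. \<Sum>i=k..conj_part \<nu> k. g (i, k))"
    by (intro sum.cong refl sum_atLeastAtMost_if_le) simp
  finally have lower: "(\<Sum>p\<in>young_diagram \<nu>. if snd p \<le> fst p then g p else 0)
      = (\<Sum>k=1..N. \<Sum>i=k..conj_part \<nu> k. g (i, k))" .
  have "sum g (young_diagram \<nu>)
      = (\<Sum>p\<in>young_diagram \<nu>. if fst p < snd p then g p else 0)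
      + (\<Sum>p\<in>young_diagram \<nu>. if snd p \<le> fst p then g p else 0)"
    by (auto simp: sum.distrib[symmetric] intro!: sum.cong)
  then show ?thesis
    unfolding upper lower .
qed

lemma lam_eq_mk_coeffs: "lam m l \<nu> d = (d, mk_coeffs m l (\<lambda>i. of_nat (\<nu> i)) (\<lambda>_. 0))"
  by (simp add: lam_def mk_coeffs_def fun_eq_iff)

lemma lam_bar_eq_mk_coeffs:
  "lam_bar m l \<nu> d = (d, mk_coeffs m l (\<lambda>_. 0) (\<lambda>k. of_nat (conj_part \<nu> k)))"
  using Ints_minus_half_notin by (simp add: lam_bar_def mk_coeffs_def fun_eq_iff)

lemma lam_tilde_eq_mk_coeffs:
  "lam_tilde m l \<nu> d = (d, mk_coeffs m l (\<lambda>i. of_nat (\<nu> i - i)) (\<lambda>k. of_nat (conj_part \<nu> k - (k - 1))))"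
proof -
  have row: "of_int (max (int n - \<lfloor>j\<rfloor>) 0) = (of_nat (n - nat \<lfloor>j\<rfloor>) :: complex)"
    if "1 \<le> j" for n and j :: rat
    using that by (simp add: max_def of_nat_diff)
  have column: "of_int (max (int n - \<lfloor>j + 1/2\<rfloor> + 1) 0) = (of_nat (n - (nat \<lfloor>j + 1/2\<rfloor> - 1)) :: complex)"
    if "j - 1/2 \<in> \<int>" and "0 < j" for n and j :: rat
  proof -
    from that(1) obtain z where z: "j - 1/2 = of_int z" by (auto elim: Ints_cases)
    then have "j + 1/2 = of_int (z + 1)" by (simp add: algebra_simps)
    then have "\<lfloor>j + 1/2\<rfloor> = z + 1" by (metis floor_of_int)
    moreover from z that(2) have "(-1 :: rat) < of_int z" by linarith
    then have "0 \<le> z" by simp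
    ultimately show ?thesis by (simp add: max_def of_nat_diff)
  qed
  show ?thesis
    by (auto simp: lam_tilde_def mk_coeffs_def fun_eq_iff row column)
qed

lemma rho_of_neg_int:
  assumes "i < 0"
  shows "rho r (of_int i) = r - of_int i" and "rho_bar r (of_int i) = r - of_int i"
    and "rho_tilde r (of_int i) = r - of_int i"
  using assms by (simp_all add: rho_def rho_bar_def rho_tilde_def)

lemma rho_of_pos:
  assumes "1 \<le> k"
  shows "rho r (of_nat k) = r + 1 - of_nat k" and "rho_bar r (of_nat k - 1/2) = r + of_nat k"
    and "rho_tilde r (of_nat k) = r + 1" and "rho_tilde r (of_nat k - 1/2) = r + 1"
proof -
  have "(of_nat k - 1/2 :: rat) - 1/2 \<in> \<int>" and "2 * (of_nat k - 1/2 :: rat) \<in> \<int>"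
    by (simp_all add: algebra_simps)
  then show "rho r (of_nat k) = r + 1 - of_nat k" "rho_bar r (of_nat k - 1/2) = r + of_nat k"
    "rho_tilde r (of_nat k) = r + 1" "rho_tilde r (of_nat k - 1/2) = r + 1"
    using assms by (simp_all add: rho_def rho_bar_def rho_tilde_def of_rat_diff of_rat_divide)
qed

lemma form_rho_lam:
  assumes "is_partition \<nu>"
  shows "form_rho (lam m l \<nu> d) (rho r) =
      (\<Sum>i=- int m..-1. l i * l i + 2 * l i * (r - of_int i))
    + (\<Sum>(i, j)\<in>young_diagram \<nu>. 2 * (of_nat j - of_nat i) + 2 * r + 1 - 2 * d)"
proof -
  obtain N where N: "\<forall>i>N. \<nu> i = 0" "\<forall>i\<ge>1. \<nu> i \<le> N"
    using is_partition_bounded[OF assms] .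
  have "form_rho (lam m l \<nu> d) (rho r) =
      (\<Sum>i=- int m..-1. l i * l i + 2 * l i * (r - of_int i))
    + (\<Sum>i=1..N. of_nat (\<nu> i) * of_nat (\<nu> i) - 2 * d * of_nat (\<nu> i) + 2 * of_nat (\<nu> i) * (r + 1 - of_nat i))"
    unfolding lam_eq_mk_coeffs using N(1)
    by (subst form_rho_mk_coeffs[where N = N and r = r]) (auto simp: rho_of_neg_int rho_def intro!: sum.cong)
  also have "(\<Sum>i=1..N. of_nat (\<nu> i) * of_nat (\<nu> i) - 2 * d * of_nat (\<nu> i) + 2 * of_nat (\<nu> i) * (r + 1 - of_nat i))
      = (\<Sum>i=1..N. \<Sum>j=1..\<nu> i. 2 * (of_nat j - of_nat i) + 2 * r + 1 - 2 * d)"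
  proof (rule sum.cong[OF refl])
    fix i
    have "(\<Sum>j=1..\<nu> i. 2 * (of_nat j - of_nat i) + 2 * r + 1 - 2 * d)
        = (\<Sum>j=Suc 0..\<nu> i. 1 * (2 * (of_nat j - of_nat 0) - 1) + (2 * r + 2 - 2 * d - 2 * of_nat i))"
      by (simp add: algebra_simps)
    also have "\<dots> = of_nat (\<nu> i) * of_nat (\<nu> i) - 2 * d * of_nat (\<nu> i) + 2 * of_nat (\<nu> i) * (r + 1 - of_nat i)"
      unfolding sum_odd_numbers_shifted by (simp add: algebra_simps)
    finally show "\<dots> = (\<Sum>j=1..\<nu> i. 2 * (of_nat j - of_nat i) + 2 * r + 1 - 2 * d)" ..
  qed
  also have "\<dots> = (\<Sum>(i, j)\<in>young_diagram \<nu>. 2 * (of_nat j - of_nat i) + 2 * r + 1 - 2 * d)"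
    by (simp add: sum_young_diagram_rows[OF N(1)])
  finally show ?thesis .
qed

lemma form_rho_lam_bar:
  assumes "is_partition \<nu>"
  shows "form_rho (lam_bar m l \<nu> d) (rho_bar r) =
      (\<Sum>i=- int m..-1. l i * l i + 2 * l i * (r - of_int i))
    + (\<Sum>(i, j)\<in>young_diagram \<nu>. 2 * (of_nat j - of_nat i) + 2 * r + 1 - 2 * d)"
proof -
  obtain N where N: "\<forall>i>N. \<nu> i = 0" "\<forall>i\<ge>1. \<nu> i \<le> N"
    using is_partition_bounded[OF assms] .
  let ?c = "\<lambda>k. of_nat (conj_part \<nu> k) :: complex"
  have "form_rho (lam_bar m l \<nu> d) (rho_bar r) =
      (\<Sum>i=- int m..-1. l i * l i + 2 * l i * (r - of_int i))
    + (\<Sum>k=1..N. - (?c k * ?c k) - 2 * d * ?c k + 2 * ?c k * (r + of_nat k))"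
    unfolding lam_bar_eq_mk_coeffs using conj_part_eq_0[OF N(2)]
    by (subst form_rho_mk_coeffs[where N = N and r = r]) (auto simp: rho_of_neg_int rho_of_pos intro!: sum.cong)
  also have "(\<Sum>k=1..N. - (?c k * ?c k) - 2 * d * ?c k + 2 * ?c k * (r + of_nat k))
      = (\<Sum>k=1..N. \<Sum>i=1..conj_part \<nu> k. 2 * (of_nat k - of_nat i) + 2 * r + 1 - 2 * d)"
  proof (rule sum.cong[OF refl])
    fix k
    have "(\<Sum>i=1..conj_part \<nu> k. 2 * (of_nat k - of_nat i) + 2 * r + 1 - 2 * d)
        = (\<Sum>i=Suc 0..conj_part \<nu> k. - 1 * (2 * (of_nat i - of_nat 0) - 1) + (2 * r + 2 * of_nat k - 2 * d))"
      by (simp add: algebra_simps)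
    also have "\<dots> = - (?c k * ?c k) - 2 * d * ?c k + 2 * ?c k * (r + of_nat k)"
      unfolding sum_odd_numbers_shifted by (simp add: algebra_simps)
    finally show "\<dots> = (\<Sum>i=1..conj_part \<nu> k. 2 * (of_nat k - of_nat i) + 2 * r + 1 - 2 * d)" ..
  qed
  also have "\<dots> = (\<Sum>(i, j)\<in>young_diagram \<nu>. 2 * (of_nat j - of_nat i) + 2 * r + 1 - 2 * d)"
    by (simp add: sum_young_diagram_columns[OF assms N(2)])
  finally show ?thesis .
qed

lemma form_rho_lam_tilde:
  assumes "is_partition \<nu>"
  shows "form_rho (lam_tilde m l \<nu> d) (rho_tilde r) =
      (\<Sum>i=- int m..-1. l i * l i + 2 * l i * (r - of_int i))
    + (\<Sum>(i, j)\<in>young_diagram \<nu>. 2 * (of_nat j - of_nat i) + 2 * r + 1 - 2 * d)"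
proof -
  obtain N where N: "\<forall>i>N. \<nu> i = 0" "\<forall>i\<ge>1. \<nu> i \<le> N"
    using is_partition_bounded[OF assms] .
  define g :: "nat \<times> nat \<Rightarrow> complex" where "g = (\<lambda>(i, j). 2 * (of_nat j - of_nat i) + 2 * r + 1 - 2 * d)"
  let ?a = "\<lambda>i. of_nat (\<nu> i - i) :: complex"
  let ?b = "\<lambda>k. of_nat (conj_part \<nu> k - (k - 1)) :: complex"
  have expand: "form_rho (lam_tilde m l \<nu> d) (rho_tilde r) =
      (\<Sum>i=- int m..-1. l i * l i + 2 * l i * (r - of_int i))
    + (\<Sum>i=1..N. ?a i * ?a i - 2 * d * ?a i + 2 * ?a i * (r + 1))
    + (\<Sum>k=1..N. - (?b k * ?b k) - 2 * d * ?b k + 2 * ?b k * (r + 1))"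
    unfolding lam_tilde_eq_mk_coeffs using N(1) conj_part_eq_0[OF N(2)]
    by (subst form_rho_mk_coeffs[where N = N and r = r]) (auto simp: rho_of_neg_int rho_of_pos intro!: sum.cong)
  have rows: "(\<Sum>i=1..N. ?a i * ?a i - 2 * d * ?a i + 2 * ?a i * (r + 1))
      = (\<Sum>i=1..N. \<Sum>j=Suc i..\<nu> i. g (i, j))"
  proof (rule sum.cong[OF refl])
    fix i
    have "(\<Sum>j=Suc i..\<nu> i. g (i, j))
        = (\<Sum>j=Suc i..\<nu> i. 1 * (2 * (of_nat j - of_nat i) - 1) + (2 * r + 2 - 2 * d))"
      by (simp add: g_def algebra_simps)
    also have "\<dots> = ?a i * ?a i - 2 * d * ?a i + 2 * ?a i * (r + 1)"
      unfolding sum_odd_numbers_shifted by (simp add: algebra_simps)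
    finally show "\<dots> = (\<Sum>j=Suc i..\<nu> i. g (i, j))" ..
  qed
  have columns: "(\<Sum>k=1..N. - (?b k * ?b k) - 2 * d * ?b k + 2 * ?b k * (r + 1))
      = (\<Sum>k=1..N. \<Sum>i=k..conj_part \<nu> k. g (i, k))"
  proof (rule sum.cong[OF refl])
    fix k :: nat assume "k \<in> {1..N}"
    then have k: "Suc (k - 1) = k" "of_nat (k - 1) = (of_nat k - 1 :: complex)"
      by auto
    have "(\<Sum>i=k..conj_part \<nu> k. g (i, k))
        = (\<Sum>i=Suc (k - 1)..conj_part \<nu> k. - 1 * (2 * (of_nat i - of_nat (k - 1)) - 1) + (2 * r + 2 - 2 * d))"
      unfolding k by (simp add: g_def algebra_simps)
    also have "\<dots> = - (?b k * ?b k) - 2 * d * ?b k + 2 * ?b k * (r + 1)"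
      unfolding sum_odd_numbers_shifted by (simp add: algebra_simps)
    finally show "\<dots> = (\<Sum>i=k..conj_part \<nu> k. g (i, k))" ..
  qed
  show ?thesis
    using sum_young_diagram_diagonal_split[OF assms N, of g]
    unfolding expand rows columns g_def by (simp add: add.assoc)
qed

theorem proposition3p3:
  fixes x :: lie_type and m :: nat and l :: "int \<Rightarrow> complex"
    and nu :: "nat \<Rightarrow> nat" and d :: complex
  assumes "is_partition nu"
    and "x = TBbullet \<Longrightarrow> (\<forall>i. - int m \<le> i \<and> i \<le> -1 \<longrightarrow> l i \<in> \<int>)"
  shows "form_rho (lam_tilde m l nu d) (rho_tilde (rr x m)) = form_rho (lam m l nu d) (rho (rr x m))
       \<and> form_rho (lam m l nu d) (rho (rr x m)) = form_rho (lam_bar m l nu d) (rho_bar (rr x m))"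
  \<comment> \<open>The three values agree for every r, so neither the type nor the integrality hypothesis matters.\<close>
  using form_rho_lam[OF assms(1)] form_rho_lam_bar[OF assms(1)] form_rho_lam_tilde[OF assms(1)]
  by simp

end
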